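(* Assume the vector variational inequality defined by $F$ and $K$ is monotone. If the weak Pareto solution set $\mathrm{Sol}^w(F,K)$ is disconnected, then each connected component of $\mathrm{Sol}^w(F,K)$ is unbounded.
   Context: Let $K\subset\mathbb{R}^n$ be a nonempty closed convex set and $F_1,\dots,F_m:K\to\mathbb{R}^n$ continuous functions; write $F=(F_1,\dots,F_m)$ and $F(x)(u)=(\langle F_1(x),u\rangle,\dots,\langle F_m(x),u\rangle)$. The problem is monotone if each $F_l$ is monotone on $K$: $\langle F_l(y)-F_l(x),y-x\rangle\ge0$ for all $x,y\in K$. The weak Pareto solution set $\mathrm{Sol}^w(F,K)$ is the set of $x\in K$ such that $F(x)(x-y)\notin\operatorname{int}\mathbb{R}^m_+$ for all $y\in K$. *)

theory Defs
  imports "HOL-Analysis.Analysis"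
begin

text \<open>A vector variational inequality in R^n with m objective maps F l, l ranging over the
finite index type 'm (so m = CARD('m)). F(x)(u) is the vector (<F_l(x),u>)_l in R^m.\<close>

definition vvi_monotone :: "('m \<Rightarrow> real^'n \<Rightarrow> real^'n) \<Rightarrow> (real^'n) set \<Rightarrow> bool" where
  "vvi_monotone F K \<longleftrightarrow>
     (\<forall>l. \<forall>x\<in>K. \<forall>y\<in>K. (F l y - F l x) \<bullet> (y - x) \<ge> 0)"

definition Sol_w :: "('m::finite \<Rightarrow> real^'n \<Rightarrow> real^'n) \<Rightarrow> (real^'n) set \<Rightarrow> (real^'n) set" where
  "Sol_w F K = {x \<in> K. \<forall>y\<in>K. \<not> (\<forall>l. F l x \<bullet> (x - y) > 0)}"

end

theory Submission
  imports Defs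
begin

text \<open>Each weight vector \<xi> in the standard simplex gives a scalar variational inequality for
  the map \<Sum>l. \<xi>$l F l, and Sol_w F K is the union of their solution sets (one inclusion is
  trivial, the other is Gordan's alternative). By monotonicity and Minty's lemma each of these
  solution sets is convex, hence connected. Suppose Sol_w F K is disconnected and has a bounded
  component C. Since components and quasi-components of compact sets coincide, C lies in a bounded
  relatively clopen subset V of Sol_w F K missing some weak Pareto solution. The set of weights
  whose solution set meets V is nonempty, is not the whole simplex, is closed because V is compact,
  and is open because the solution set of a monotone variational inequality, once contained in a
  bounded open set, stays inside it under small perturbations of the map. This contradicts the
  connectedness of the simplex.\<close>

section \<open>Scalar variational inequalities\<close>

definition vi_solutions :: "('a::real_inner \<Rightarrow> 'a) \<Rightarrow> 'a set \<Rightarrow> 'a set" where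
  "vi_solutions G K = {x\<in>K. \<forall>y\<in>K. G x \<bullet> (y - x) \<ge> 0}"

definition monotone_op_on :: "'a set \<Rightarrow> ('a::real_inner \<Rightarrow> 'a) \<Rightarrow> bool" where
  "monotone_op_on K G \<longleftrightarrow> (\<forall>x\<in>K. \<forall>y\<in>K. (G y - G x) \<bullet> (y - x) \<ge> 0)"

lemma monotone_op_on_subset: "monotone_op_on K G \<Longrightarrow> D \<subseteq> K \<Longrightarrow> monotone_op_on D G"
  by (auto simp: monotone_op_on_def)

lemma minty_imp_vi_solution:
  fixes G :: "'a::real_inner \<Rightarrow> 'a"
  assumes "convex K" "continuous_on K G" "x \<in> K" and minty: "\<And>y. y \<in> K \<Longrightarrow> G y \<bullet> (y - x) \<ge> 0"
  shows "x \<in> vi_solutions G K"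
  unfolding vi_solutions_def
proof (intro CollectI conjI ballI \<open>x \<in> K\<close>)
  fix y assume "y \<in> K"
  define z where "z t = (1 - t) *\<^sub>R x + t *\<^sub>R y" for t :: real
  have zK: "z t \<in> K" if "t \<in> {0..1}" for t
    using that convexD_alt[OF assms(1,3) \<open>y \<in> K\<close>] by (simp add: z_def)
  have z_minus: "z t - x = t *\<^sub>R (y - x)" for t
    by (simp add: z_def algebra_simps)
  have cont: "continuous_on (closure {0<..1}) (\<lambda>t. G (z t) \<bullet> (y - x))"
    unfolding closure_greaterThanAtMost[OF zero_less_one] z_def
    by (intro continuous_intros continuous_on_compose2[OF assms(2)]) (use zK in \<open>auto simp: z_def\<close>)
  have pos: "G (z t) \<bullet> (y - x) \<ge> 0" if "t \<in> {0<..1}" for t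
  proof -
    have "0 \<le> G (z t) \<bullet> (z t - x)" using minty zK that by auto
    then show ?thesis using that by (simp add: z_minus zero_le_mult_iff)
  qed
  have "G (z 0) \<bullet> (y - x) \<ge> 0"
    using continuous_ge_on_closure[OF cont _ pos, of 0] by simp_all
  then show "G x \<bullet> (y - x) \<ge> 0" by (simp add: z_def)
qed

lemma vi_solution_imp_minty:
  assumes "monotone_op_on K G" "x \<in> vi_solutions G K" "y \<in> K"
  shows "G y \<bullet> (y - x) \<ge> 0"
proof -
  have "(G y - G x) \<bullet> (y - x) \<ge> 0" "G x \<bullet> (y - x) \<ge> 0"
    using assms by (auto simp: monotone_op_on_def vi_solutions_def)
  then show ?thesis by (simp add: inner_diff_left)
qed

lemma convex_vi_solutions:
  fixes G :: "'a::real_inner \<Rightarrow> 'a"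
  assumes "convex K" "continuous_on K G" "monotone_op_on K G"
  shows "convex (vi_solutions G K)"
proof (rule convexI)
  fix x1 x2 and u v :: real
  assume x: "x1 \<in> vi_solutions G K" "x2 \<in> vi_solutions G K" and uv: "0 \<le> u" "0 \<le> v" "u + v = 1"
  have K: "u *\<^sub>R x1 + v *\<^sub>R x2 \<in> K"
    using x uv assms(1) by (auto simp: vi_solutions_def convex_def)
  show "u *\<^sub>R x1 + v *\<^sub>R x2 \<in> vi_solutions G K"
  proof (rule minty_imp_vi_solution[OF assms(1,2) K])
    fix y assume y: "y \<in> K"
    have "y - (u *\<^sub>R x1 + v *\<^sub>R x2) = u *\<^sub>R (y - x1) + v *\<^sub>R (y - x2)"
      using uv by (simp add: algebra_simps flip: scaleR_add_left)
    then have "G y \<bullet> (y - (u *\<^sub>R x1 + v *\<^sub>R x2)) = u * (G y \<bullet> (y - x1)) + v * (G y \<bullet> (y - x2))"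
      by (simp add: inner_add_right)
    moreover have "G y \<bullet> (y - x1) \<ge> 0" "G y \<bullet> (y - x2) \<ge> 0"
      using vi_solution_imp_minty[OF assms(3)] x y by auto
    ultimately show "G y \<bullet> (y - (u *\<^sub>R x1 + v *\<^sub>R x2)) \<ge> 0"
      using uv by simp
  qed
qed

text \<open>Hartman--Stampacchia: a solution is a fixed point of x \<mapsto> proj_D (x - G x).\<close>
lemma vi_solutions_nonempty:
  fixes G :: "'a::euclidean_space \<Rightarrow> 'a"
  assumes "compact D" "convex D" "D \<noteq> {}" "continuous_on D G"
  shows "vi_solutions G D \<noteq> {}"
proof -
  define f where "f x = closest_point D (x - G x)" for x
  have "closed D" using assms(1) compact_imp_closed by blast
  have "continuous_on D f" unfolding f_def
    by (rule continuous_on_compose2[OF continuous_on_closest_point[OF assms(2) \<open>closed D\<close> assms(3)]])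
       (auto intro!: continuous_intros assms(4))
  moreover have "f \<in> D \<rightarrow> D"
    unfolding f_def using closest_point_in_set[OF \<open>closed D\<close> assms(3)] by auto
  ultimately obtain x where x: "x \<in> D" "f x = x"
    using brouwer[OF assms(1-3)] by metis
  have "G x \<bullet> (y - x) \<ge> 0" if "y \<in> D" for y
    using closest_point_dot[OF assms(2) \<open>closed D\<close> that, of "x - G x"] x(2) by (simp add: f_def)
  then show ?thesis using x(1) by (auto simp: vi_solutions_def)
qed

lemma vi_solution_localize:
  fixes G :: "'a::real_inner \<Rightarrow> 'a"
  assumes "convex K" "open B" "K \<inter> B \<subseteq> D" "D \<subseteq> K" "x \<in> B" "x \<in> vi_solutions G D"
  shows "x \<in> vi_solutions G K"
  unfolding vi_solutions_def
proof (intro CollectI conjI ballI)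
  show "x \<in> K" using assms(4,6) by (auto simp: vi_solutions_def)
  fix y assume "y \<in> K"
  define z where "z t = (1 - t) *\<^sub>R x + t *\<^sub>R y" for t :: real
  have "(z \<longlongrightarrow> x) (at_right 0)"
    unfolding z_def by (auto intro!: tendsto_eq_intros)
  then have "\<forall>\<^sub>F t in at_right 0. z t \<in> B"
    using assms(2,5) by (rule topological_tendstoD)
  moreover have "\<forall>\<^sub>F t in at_right (0::real). 0 < t \<and> t < 1"
    by (rule eventually_at_rightI[of 0 1]) auto
  ultimately have "\<forall>\<^sub>F t in at_right 0. z t \<in> B \<and> 0 < t \<and> t < 1"
    by (rule eventually_conj)
  then obtain t where t: "z t \<in> B" "0 < t" "t < 1"
    using eventually_happens'[OF trivial_limit_at_right_real] by blast
  have "z t \<in> K"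
    using convexD_alt[OF assms(1) \<open>x \<in> K\<close> \<open>y \<in> K\<close>] t by (simp add: z_def)
  then have "0 \<le> G x \<bullet> (z t - x)"
    using assms(3,6) t(1) by (auto simp: vi_solutions_def)
  also have "z t - x = t *\<^sub>R (y - x)"
    by (simp add: z_def algebra_simps)
  finally show "G x \<bullet> (y - x) \<ge> 0"
    using t(2) by (simp add: zero_le_mult_iff)
qed

section \<open>Stability of bounded solution sets\<close>

lemma uniform_minty_violation:
  fixes G :: "'a::real_inner \<Rightarrow> 'a"
  assumes "convex K" "continuous_on K G" "compact T" "T \<subseteq> K" "T \<inter> vi_solutions G K = {}"
  obtains P \<eta> where "finite P" "P \<subseteq> K" "\<eta> > 0" "\<And>z. z \<in> T \<Longrightarrow> \<exists>y\<in>P. G y \<bullet> (y - z) < - \<eta>"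
proof -
  define H where "H q = {z. G (fst q) \<bullet> (fst q - z) < - snd q}" for q
  have "open (H q)" for q
    unfolding H_def by (intro open_Collect_less continuous_intros)
  moreover have "T \<subseteq> (\<Union>q\<in>K \<times> {0<..}. H q)"
  proof
    fix z assume "z \<in> T"
    then obtain y where "y \<in> K" "G y \<bullet> (y - z) < 0"
      using minty_imp_vi_solution[OF assms(1,2)] assms(4,5) by (metis disjoint_iff not_le subsetD)
    then show "z \<in> (\<Union>q\<in>K \<times> {0<..}. H q)"
      by (intro UN_I[of "(y, - (G y \<bullet> (y - z)) / 2)"]) (auto simp: H_def)
  qed
  ultimately obtain Q where Q: "Q \<subseteq> K \<times> {0<..}" "finite Q" "T \<subseteq> (\<Union>q\<in>Q. H q)"
    using compactE_image[OF assms(3)] by metis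
  define \<eta> where "\<eta> = Min (insert 1 (snd ` Q))"
  show thesis
  proof (rule that[of "fst ` Q" \<eta>])
    show "finite (fst ` Q)" "fst ` Q \<subseteq> K" "\<eta> > 0"
      using Q(1,2) by (auto simp: \<eta>_def)
    fix z assume "z \<in> T"
    then obtain q where "q \<in> Q" "z \<in> H q"
      using Q(3) by blast
    moreover have "\<eta> \<le> snd q"
      using Q(2) \<open>q \<in> Q\<close> by (auto simp: \<eta>_def)
    ultimately show "\<exists>y\<in>fst ` Q. G y \<bullet> (y - z) < - \<eta>"
      by (intro bexI[of _ "fst q"]) (auto simp: H_def)
  qed
qed

lemma closed_segment_leaves_ball:
  fixes x0 x :: "'a::real_normed_vector"
  assumes "U \<subseteq> ball x0 r" "x \<notin> U" "0 \<le> r"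
  obtains z where "z \<in> closed_segment x0 x" "z \<notin> U" "dist x0 z \<le> r"
proof (cases "dist x0 x \<le> r")
  case True
  then show ?thesis using that[of x] assms(2) by simp
next
  case False
  define u where "u = r / dist x0 x"
  define z where "z = (1 - u) *\<^sub>R x0 + u *\<^sub>R x"
  have u: "0 \<le> u" "u \<le> 1" using False assms(3) by (auto simp: u_def divide_le_eq)
  have "z \<in> closed_segment x0 x" using u by (auto simp: in_segment z_def)
  moreover have "dist x0 z = r"
  proof -
    have "x0 - z = u *\<^sub>R (x0 - x)" by (simp add: z_def algebra_simps)
    then have "dist x0 z = u * dist x0 x" using u(1) by (simp add: dist_norm)
    moreover have "x0 \<noteq> x" using False assms(3) by auto
    ultimately show ?thesis by (simp add: u_def)
  qed
  moreover from this have "z \<notin> U" using assms(1) by auto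
  ultimately show ?thesis using that by simp
qed

lemma abs_inner_le_mult:
  fixes u v :: "'a::real_inner"
  assumes "norm u \<le> \<epsilon>" "norm v \<le> c"
  shows "\<bar>u \<bullet> v\<bar> \<le> \<epsilon> * c"
proof -
  have "\<bar>u \<bullet> v\<bar> \<le> norm u * norm v"
    by (rule Cauchy_Schwarz_ineq2)
  also have "\<dots> \<le> \<epsilon> * c"
    using assms by (intro mult_mono) (auto intro: order_trans[OF norm_ge_zero])
  finally show ?thesis .
qed

lemma inner_closed_segment_lower_bound:
  fixes w y a b z :: "'a::real_inner"
  assumes "w \<bullet> (y - a) \<ge> c" "w \<bullet> (y - b) \<ge> c" "z \<in> closed_segment a b"
  shows "w \<bullet> (y - z) \<ge> c"
proof -
  obtain u where u: "0 \<le> u" "u \<le> 1" "z = (1 - u) *\<^sub>R a + u *\<^sub>R b"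
    using assms(3) by (auto simp: in_segment)
  have "y - z = (1 - u) *\<^sub>R (y - a) + u *\<^sub>R (y - b)"
    by (simp add: u(3) algebra_simps)
  then have "w \<bullet> (y - z) = (1 - u) * (w \<bullet> (y - a)) + u * (w \<bullet> (y - b))"
    by (simp add: inner_add_right)
  also have "\<dots> \<ge> (1 - u) * c + u * c"
    using assms(1,2) u(1,2) by (intro add_mono mult_left_mono) auto
  finally show ?thesis
    by (simp add: algebra_simps)
qed

lemma minty_perturbed_solution:
  assumes "monotone_op_on K G'" "x0 \<in> vi_solutions G K" "y \<in> K"
    and "norm (G' x0 - G x0) \<le> \<epsilon>" "norm (y - x0) \<le> R"
  shows "G' y \<bullet> (y - x0) \<ge> - \<epsilon> * R"
proof -
  have "(G' y - G' x0) \<bullet> (y - x0) \<ge> 0" "G x0 \<bullet> (y - x0) \<ge> 0"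
    using assms(1-3) by (auto simp: monotone_op_on_def vi_solutions_def)
  moreover have "\<bar>(G' x0 - G x0) \<bullet> (y - x0)\<bar> \<le> \<epsilon> * R"
    using assms(4,5) by (rule abs_inner_le_mult)
  ultimately show ?thesis
    by (simp add: inner_diff_left abs_le_iff)
qed

lemma perturbed_minty_lower_bound:
  fixes G G' :: "'a::real_inner \<Rightarrow> 'a"
  assumes mono: "monotone_op_on K G'" and D: "D \<subseteq> K \<inter> cball x0 R"
    and x0: "x0 \<in> vi_solutions G K" and x: "x \<in> vi_solutions G' D" and "y \<in> D"
    and z: "z \<in> closed_segment x0 x"
    and close: "norm (G' x0 - G x0) \<le> \<epsilon>" "norm (G' y - G y) \<le> \<epsilon>"
  shows "G y \<bullet> (y - z) \<ge> - 3 * \<epsilon> * R"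
proof -
  have "y \<in> K" "norm (y - x0) \<le> R" "x \<in> cball x0 R"
    using x \<open>y \<in> D\<close> D by (auto simp: vi_solutions_def dist_norm norm_minus_commute)
  have "0 \<le> \<epsilon>" "0 \<le> R"
    using close(1) \<open>norm (y - x0) \<le> R\<close> by (auto intro: order_trans[OF norm_ge_zero])
  have "G' y \<bullet> (y - x0) \<ge> - \<epsilon> * R"
    using minty_perturbed_solution[OF mono x0 \<open>y \<in> K\<close> close(1) \<open>norm (y - x0) \<le> R\<close>] .
  moreover have "G' y \<bullet> (y - x) \<ge> - \<epsilon> * R"
    using vi_solution_imp_minty[OF monotone_op_on_subset[OF mono] x \<open>y \<in> D\<close>] D
      mult_nonneg_nonneg[OF \<open>0 \<le> \<epsilon>\<close> \<open>0 \<le> R\<close>] by auto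
  ultimately have at_z: "G' y \<bullet> (y - z) \<ge> - \<epsilon> * R"
    using z by (rule inner_closed_segment_lower_bound)
  have "closed_segment x0 x \<subseteq> cball x0 R"
    using \<open>0 \<le> R\<close> \<open>x \<in> cball x0 R\<close> by (intro closed_segment_subset) auto
  then have "z \<in> cball x0 R"
    using z by blast
  then have "dist y z \<le> 2 * R"
    using dist_triangle[of y z x0] \<open>y \<in> D\<close> D by (auto simp: dist_commute)
  then have "\<bar>(G' y - G y) \<bullet> (y - z)\<bar> \<le> \<epsilon> * (2 * R)"
    using close(2) by (intro abs_inner_le_mult) (simp_all add: dist_norm)
  with at_z show ?thesis
    by (simp add: inner_diff_left abs_le_iff)
qed

text \<open>If x lay outside U, the segment from x0 to x would cross the shell around U where G violates
  a Minty inequality by a margin; but G' is close to G at x0 and at the test points.\<close>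
lemma perturbed_solution_stays_inside:
  fixes G G' :: "'a::real_inner \<Rightarrow> 'a"
  assumes "convex K" "monotone_op_on K G'" "x0 \<in> vi_solutions G K"
    and x: "x \<in> vi_solutions G' (K \<inter> cball x0 R)" and U: "U \<subseteq> ball x0 r" "0 \<le> r"
    and violated: "\<And>z. z \<in> K \<Longrightarrow> dist x0 z \<le> r \<Longrightarrow> z \<notin> U \<Longrightarrow> \<exists>y\<in>P. G y \<bullet> (y - z) < - 4 * \<epsilon> * R"
    and P: "P \<subseteq> K \<inter> cball x0 R" and close: "\<And>p. p \<in> insert x0 P \<Longrightarrow> norm (G' p - G p) \<le> \<epsilon>"
  shows "x \<in> U"
proof (rule ccontr)
  assume "x \<notin> U"
  then obtain z where z: "z \<in> closed_segment x0 x" "z \<notin> U" "dist x0 z \<le> r"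
    by (rule closed_segment_leaves_ball[OF U(1) _ U(2)]) blast
  have "x0 \<in> K" "x \<in> K"
    using assms(3) x by (auto simp: vi_solutions_def)
  then have "z \<in> K"
    using closed_segment_subset[OF _ _ assms(1)] z(1) by blast
  then obtain y where "y \<in> P" and y: "G y \<bullet> (y - z) < - 4 * \<epsilon> * R"
    using violated[OF _ z(3,2)] by blast
  have "y \<in> K \<inter> cball x0 R"
    using P \<open>y \<in> P\<close> by blast
  then have "G y \<bullet> (y - z) \<ge> - 3 * \<epsilon> * R"
    using perturbed_minty_lower_bound[OF assms(2) order_refl assms(3) x _ z(1) close[of x0] close[of y]]
      \<open>y \<in> P\<close> by simp
  moreover have "0 \<le> \<epsilon>"
    using close[of x0] by (auto intro: order_trans[OF norm_ge_zero])
  moreover have "0 \<le> R"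
    using \<open>y \<in> K \<inter> cball x0 R\<close> by (auto intro: order_trans[OF zero_le_dist])
  ultimately show False
    using y mult_nonneg_nonneg[of \<epsilon> R] by linarith
qed

lemma minty_violation_off_nbhd:
  fixes G :: "'a::euclidean_space \<Rightarrow> 'a"
  assumes "closed K" "convex K" "continuous_on K G" "open U" "vi_solutions G K \<subseteq> U"
  obtains P \<eta> where "finite P" "P \<subseteq> K" "\<eta> > 0"
    "\<And>z. z \<in> K \<Longrightarrow> dist x0 z \<le> r \<Longrightarrow> z \<notin> U \<Longrightarrow> \<exists>y\<in>P. G y \<bullet> (y - z) < - \<eta>"
proof -
  define T where "T = cball x0 r \<inter> (K - U)"
  have "compact T"
    unfolding T_def using assms(1,4) by (intro compact_Int_closed closed_Diff) auto
  moreover have "T \<subseteq> K" "T \<inter> vi_solutions G K = {}"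
    using assms(5) by (auto simp: T_def)
  ultimately obtain P \<eta> where "finite P" "P \<subseteq> K" "\<eta> > 0"
    and "\<And>z. z \<in> T \<Longrightarrow> \<exists>y\<in>P. G y \<bullet> (y - z) < - \<eta>"
    by (rule uniform_minty_violation[OF assms(2,3)]) blast
  then show thesis
    using that[of P \<eta>] by (simp add: T_def)
qed

lemma perturbed_vi_solutions_meet:
  fixes G G' :: "'a::euclidean_space \<Rightarrow> 'a"
  assumes K: "closed K" "convex K" and "x0 \<in> vi_solutions G K" and U: "U \<subseteq> ball x0 r" "0 \<le> r" "r < R"
    and violated: "\<And>z. z \<in> K \<Longrightarrow> dist x0 z \<le> r \<Longrightarrow> z \<notin> U \<Longrightarrow> \<exists>y\<in>P. G y \<bullet> (y - z) < - 4 * \<epsilon> * R"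
    and P: "P \<subseteq> K \<inter> cball x0 R" and "continuous_on K G'" "monotone_op_on K G'"
    and close: "\<And>p. p \<in> insert x0 P \<Longrightarrow> norm (G' p - G p) \<le> \<epsilon>"
  shows "vi_solutions G' K \<inter> U \<noteq> {}"
proof -
  have "x0 \<in> K" using assms(3) by (simp add: vi_solutions_def)
  define D where "D = K \<inter> cball x0 R"
  have "compact D" "convex D" "D \<noteq> {}" "continuous_on D G'"
    using K \<open>x0 \<in> K\<close> U(2,3) continuous_on_subset[OF assms(9)]
    by (auto simp: D_def compact_Int_closed convex_Int)
  then obtain x where x: "x \<in> vi_solutions G' D"
    using vi_solutions_nonempty by blast
  have "x \<in> U"
    using perturbed_solution_stays_inside[OF K(2) assms(10,3) x[unfolded D_def] U(1,2) violated P close] .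
  moreover have "x \<in> ball x0 R"
    using \<open>x \<in> U\<close> U(1,3) by auto
  then have "x \<in> vi_solutions G' K"
    by (intro vi_solution_localize[OF K(2) open_ball _ _ _ x]) (auto simp: D_def)
  ultimately show ?thesis by blast
qed

lemma vi_solutions_stable:
  fixes G :: "'a::euclidean_space \<Rightarrow> 'a"
  assumes K: "closed K" "convex K" and "continuous_on K G" and "x0 \<in> vi_solutions G K"
    and U: "open U" "bounded U" "vi_solutions G K \<subseteq> U"
  obtains P \<epsilon> where "finite P" "P \<subseteq> K" "\<epsilon> > 0"
    "\<And>G'. continuous_on K G' \<Longrightarrow> monotone_op_on K G' \<Longrightarrow> (\<And>p. p \<in> P \<Longrightarrow> norm (G' p - G p) < \<epsilon>)
       \<Longrightarrow> vi_solutions G' K \<inter> U \<noteq> {}"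
proof -
  have "x0 \<in> K" using assms(4) by (simp add: vi_solutions_def)
  obtain r where r: "r > 0" "U \<subseteq> ball x0 r"
    using bounded_subset_ballD[OF U(2)] by blast
  obtain P0 \<eta> where P0: "finite P0" "P0 \<subseteq> K" "\<eta> > 0"
    and violated: "\<And>z. z \<in> K \<Longrightarrow> dist x0 z \<le> r \<Longrightarrow> z \<notin> U \<Longrightarrow> \<exists>y\<in>P0. G y \<bullet> (y - z) < - \<eta>"
    by (rule minty_violation_off_nbhd[OF K assms(3) U(1,3)]) blast
  obtain R0 where "R0 > 0" "P0 \<subseteq> ball x0 R0"
    using bounded_subset_ballD[OF finite_imp_bounded[OF P0(1)]] by blast
  define R where "R = R0 + r"
  have "P0 \<subseteq> K \<inter> cball x0 R" "r < R"
    using P0(2) \<open>P0 \<subseteq> ball x0 R0\<close> \<open>R0 > 0\<close> r(1) by (auto simp: R_def subset_iff)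
  define \<epsilon> where "\<epsilon> = \<eta> / (4 * R)"
  have "4 * \<epsilon> * R = \<eta>"
    using r(1) \<open>r < R\<close> by (simp add: \<epsilon>_def)
  show thesis
  proof (rule that[of "insert x0 P0" \<epsilon>])
    show "finite (insert x0 P0)" "insert x0 P0 \<subseteq> K" "\<epsilon> > 0"
      using P0 \<open>x0 \<in> K\<close> r(1) \<open>r < R\<close> by (auto simp: \<epsilon>_def)
    fix G' assume "continuous_on K G'" "monotone_op_on K G'"
      and close: "\<And>p. p \<in> insert x0 P0 \<Longrightarrow> norm (G' p - G p) < \<epsilon>"
    show "vi_solutions G' K \<inter> U \<noteq> {}"
    proof (rule perturbed_vi_solutions_meet[OF K assms(4) r(2) less_imp_le[OF r(1)] \<open>r < R\<close> _
          \<open>P0 \<subseteq> K \<inter> cball x0 R\<close> \<open>continuous_on K G'\<close> \<open>monotone_op_on K G'\<close>])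
      show "\<exists>y\<in>P0. G y \<bullet> (y - z) < - 4 * \<epsilon> * R" if "z \<in> K" "dist x0 z \<le> r" "z \<notin> U" for z
        using violated[OF that] \<open>4 * \<epsilon> * R = \<eta>\<close> by simp
      show "norm (G' p - G p) \<le> \<epsilon>" if "p \<in> insert x0 P0" for p
        using close[OF that] by simp
    qed
  qed
qed

section \<open>Scalarization\<close>

definition weight_simplex :: "(real^'m::finite) set" where
  "weight_simplex = {\<xi>. (\<forall>l. 0 \<le> \<xi>$l) \<and> (\<Sum>l\<in>UNIV. \<xi>$l) = 1}"

definition scalarization :: "('m::finite \<Rightarrow> 'a \<Rightarrow> 'a::real_normed_vector) \<Rightarrow> real^'m \<Rightarrow> 'a \<Rightarrow> 'a" where
  "scalarization F \<xi> = (\<lambda>x. \<Sum>l\<in>UNIV. \<xi>$l *\<^sub>R F l x)"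

lemma inner_scalarization: "scalarization F \<xi> x \<bullet> v = (\<Sum>l\<in>UNIV. \<xi>$l * (F l x \<bullet> v))"
  by (simp add: scalarization_def inner_sum_left)

lemma inner_scalarization_swap:
  "scalarization F \<xi> x \<bullet> (y - x) = - (\<Sum>l\<in>UNIV. \<xi>$l * (F l x \<bullet> (x - y)))"
  unfolding inner_scalarization sum_negf[symmetric]
  by (rule sum.cong) (simp_all add: inner_diff_right algebra_simps)

lemma continuous_on_scalarization:
  assumes "\<And>l. continuous_on K (F l)"
  shows "continuous_on K (scalarization F \<xi>)"
  unfolding scalarization_def by (intro continuous_on_sum continuous_on_scaleR continuous_on_const assms)

lemma monotone_op_on_scalarization:
  assumes "vvi_monotone F K" "\<And>l. 0 \<le> \<xi>$l"
  shows "monotone_op_on K (scalarization F \<xi>)"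
  unfolding monotone_op_on_def
proof (intro ballI)
  fix x y assume "x \<in> K" "y \<in> K"
  have "(scalarization F \<xi> y - scalarization F \<xi> x) \<bullet> (y - x)
          = (\<Sum>l\<in>UNIV. \<xi>$l * ((F l y - F l x) \<bullet> (y - x)))"
    by (simp add: inner_diff_left inner_scalarization sum_subtractf[symmetric] right_diff_distrib)
  also have "\<dots> \<ge> 0"
    using assms \<open>x \<in> K\<close> \<open>y \<in> K\<close> by (auto simp: vvi_monotone_def intro!: sum_nonneg)
  finally show "(scalarization F \<xi> y - scalarization F \<xi> x) \<bullet> (y - x) \<ge> 0" .
qed

lemma weight_simplex_nonneg: "\<xi> \<in> weight_simplex \<Longrightarrow> 0 \<le> \<xi>$l"
  by (simp add: weight_simplex_def)

lemma convex_weight_simplex: "convex weight_simplex"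
  unfolding convex_def weight_simplex_def
  by (auto simp: sum.distrib sum_distrib_left[symmetric])

lemma compact_weight_simplex: "compact (weight_simplex :: (real^'m::finite) set)"
proof -
  have "weight_simplex = (\<Inter>l. {\<xi>::real^'m. \<xi>$l \<ge> 0}) \<inter> {\<xi>. (\<Sum>l\<in>UNIV. \<xi>$l) = 1}"
    by (auto simp: weight_simplex_def)
  also have "closed \<dots>"
    by (intro closed_Int closed_INT ballI closed_halfspace_component_ge_cart closed_Collect_eq continuous_intros)
  finally have "closed (weight_simplex :: (real^'m) set)" .
  moreover have "norm \<xi> \<le> 1" if "\<xi> \<in> weight_simplex" for \<xi> :: "real^'m"
    using norm_le_l1_cart[of \<xi>] that by (simp add: weight_simplex_def)
  then have "bounded (weight_simplex :: (real^'m) set)"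
    by (auto simp: bounded_iff)
  ultimately show ?thesis by (simp add: compact_eq_bounded_closed)
qed

lemma vi_solutions_scalarization_subset_Sol_w:
  assumes "\<xi> \<in> weight_simplex"
  shows "vi_solutions (scalarization F \<xi>) K \<subseteq> Sol_w F K"
proof
  fix x assume x: "x \<in> vi_solutions (scalarization F \<xi>) K"
  have "\<not> (\<forall>l. F l x \<bullet> (x - y) > 0)" if "y \<in> K" for y
  proof
    assume pos: "\<forall>l. F l x \<bullet> (x - y) > 0"
    have "\<exists>l. \<xi>$l \<noteq> 0"
    proof (rule ccontr)
      assume "\<nexists>l. \<xi>$l \<noteq> 0"
      then have "(\<Sum>l\<in>UNIV. \<xi>$l) = 0" by simp
      with assms show False by (simp add: weight_simplex_def)
    qed
    then obtain l0 where "\<xi>$l0 > 0"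
      using assms by (force simp: weight_simplex_def order_le_less)
    then have "0 < (\<Sum>l\<in>UNIV. \<xi>$l * (F l x \<bullet> (x - y)))"
      using assms pos
      by (intro sum_pos2[of UNIV l0]) (auto simp: weight_simplex_def intro: mult_nonneg_nonneg less_imp_le)
    also have "\<dots> = - (scalarization F \<xi> x \<bullet> (y - x))"
      by (simp add: inner_scalarization_swap)
    finally show False
      using x \<open>y \<in> K\<close> by (auto simp: vi_solutions_def)
  qed
  then show "x \<in> Sol_w F K"
    using x by (auto simp: Sol_w_def vi_solutions_def)
qed

lemma convex_open_positive_orthant: "convex {p::real^'m::finite. \<forall>l. 0 < p$l}"
proof -
  have "{p::real^'m. \<forall>l. 0 < p$l} = (\<Inter>l. {p. axis l 1 \<bullet> p > 0})"
    by (auto simp: cart_eq_inner_axis inner_commute)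
  then show ?thesis
    by (simp add: convex_INT convex_halfspace_gt)
qed

lemma orthant_lower_bound_nonneg:
  fixes a :: "real^'m::finite"
  assumes "\<And>p. \<forall>l. 0 < p$l \<Longrightarrow> c \<le> a \<bullet> p"
  shows "0 \<le> a$l"
proof (rule ccontr)
  assume "\<not> 0 \<le> a$l"
  define one :: "real^'m" where "one = (\<chi> l. 1)"
  define t where "t = (\<bar>a \<bullet> one - c\<bar> + 1) / (- a$l)"
  have "t > 0"
    using \<open>\<not> 0 \<le> a$l\<close> unfolding t_def by (intro divide_pos_pos) (auto intro: add_nonneg_pos)
  then have "c \<le> a \<bullet> (one + t *\<^sub>R axis l 1)"
    by (intro assms) (auto simp: one_def axis_def)
  also have "\<dots> = a \<bullet> one + t * a$l"
    by (simp add: inner_add_right inner_axis)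
  also have "t * a$l = - (\<bar>a \<bullet> one - c\<bar> + 1)"
    using \<open>\<not> 0 \<le> a$l\<close> by (simp add: t_def)
  finally show False
    using abs_ge_self[of "a \<bullet> one - c"] by linarith
qed

lemma orthant_lower_bound_nonpos:
  fixes a :: "real^'m::finite"
  assumes "\<And>p. \<forall>l. 0 < p$l \<Longrightarrow> c \<le> a \<bullet> p"
  shows "c \<le> 0"
proof -
  define one :: "real^'m" where "one = (\<chi> l. 1)"
  have "((\<lambda>\<delta>. a \<bullet> (\<delta> *\<^sub>R one)) \<longlongrightarrow> 0) (at_right 0)"
    by (auto intro!: tendsto_eq_intros)
  moreover have "\<forall>\<^sub>F \<delta> in at_right 0. c \<le> a \<bullet> (\<delta> *\<^sub>R one)"
    using eventually_at_right_less
  proof (rule eventually_mono)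
    fix \<delta> :: real assume "0 < \<delta>"
    then show "c \<le> a \<bullet> (\<delta> *\<^sub>R one)" by (intro assms) (simp add: one_def)
  qed
  ultimately show ?thesis
    by (rule tendsto_lowerbound) simp
qed

text \<open>Gordan's alternative.\<close>
lemma orthant_separating_weight:
  fixes B :: "(real^'m::finite) set"
  assumes "convex B" "B \<noteq> {}" "\<And>b. b \<in> B \<Longrightarrow> \<exists>l. b$l \<le> 0"
  obtains \<xi> where "\<xi> \<in> weight_simplex" "\<And>b. b \<in> B \<Longrightarrow> \<xi> \<bullet> b \<le> 0"
proof -
  define A where "A = (\<Union>p\<in>{p. \<forall>l. 0 < p$l}. \<Union>b\<in>B. {p - b})"
  have "convex A"
    unfolding A_def by (rule convex_differences[OF convex_open_positive_orthant assms(1)])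
  moreover have "0 \<notin> A"
    using assms(3) by (fastforce simp: A_def not_le[symmetric])
  ultimately obtain a where "a \<noteq> 0" and "\<forall>v\<in>A. 0 \<le> a \<bullet> v"
    using separating_hyperplane_set_0 by blast
  have sep: "a \<bullet> b \<le> a \<bullet> p" if "\<forall>l. 0 < p$l" "b \<in> B" for p b
  proof -
    have "p - b \<in> A" using that by (auto simp: A_def)
    then show ?thesis using \<open>\<forall>v\<in>A. 0 \<le> a \<bullet> v\<close> by (auto simp: inner_diff_right)
  qed
  obtain b0 where "b0 \<in> B" using assms(2) by blast
  have nonneg: "0 \<le> a$l" for l
    using sep[OF _ \<open>b0 \<in> B\<close>] by (rule orthant_lower_bound_nonneg)
  define s where "s = (\<Sum>l\<in>UNIV. a$l)"
  obtain l0 where "a$l0 \<noteq> 0"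
    using \<open>a \<noteq> 0\<close> by (auto simp: vec_eq_iff)
  then have "s > 0"
    unfolding s_def using nonneg by (intro sum_pos2[of UNIV l0]) (auto simp: order_le_less)
  show thesis
  proof (rule that[of "(1 / s) *\<^sub>R a"])
    show "(1 / s) *\<^sub>R a \<in> weight_simplex"
      using \<open>s > 0\<close> nonneg by (simp add: weight_simplex_def s_def sum_divide_distrib[symmetric])
    show "(1 / s) *\<^sub>R a \<bullet> b \<le> 0" if "b \<in> B" for b
      using orthant_lower_bound_nonpos[OF sep[OF _ that]] \<open>s > 0\<close> by (simp add: divide_nonpos_pos)
  qed
qed

lemma Sol_w_imp_scalarized_solution:
  fixes F :: "'m::finite \<Rightarrow> real^'n \<Rightarrow> real^'n"
  assumes "convex K" "x \<in> Sol_w F K"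
  obtains \<xi> where "\<xi> \<in> weight_simplex" "x \<in> vi_solutions (scalarization F \<xi>) K"
proof -
  define L :: "real^'n \<Rightarrow> real^'m" where "L v = (\<chi> l. F l x \<bullet> v)" for v
  have "linear L"
    by (rule linearI) (simp_all add: L_def vec_eq_iff inner_add_right)
  have "x \<in> K" using assms(2) by (simp add: Sol_w_def)
  define B where "B = (\<lambda>y. L (x - y)) ` K"
  have "B = L ` ((+) x ` uminus ` K)"
    by (simp add: B_def image_image)
  then have "convex B"
    using convex_linear_image[OF \<open>linear L\<close> convex_translation[OF convex_negations[OF assms(1)]]] by simp
  moreover have "B \<noteq> {}" using \<open>x \<in> K\<close> by (auto simp: B_def)
  moreover have "\<exists>l. b$l \<le> 0" if "b \<in> B" for b
    using assms(2) that by (auto simp: B_def L_def Sol_w_def not_less)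
  ultimately obtain \<xi> where "\<xi> \<in> weight_simplex" and \<xi>: "\<And>b. b \<in> B \<Longrightarrow> \<xi> \<bullet> b \<le> 0"
    using orthant_separating_weight by blast
  have "x \<in> vi_solutions (scalarization F \<xi>) K"
    unfolding vi_solutions_def
  proof (intro CollectI conjI ballI \<open>x \<in> K\<close>)
    fix y assume "y \<in> K"
    have "\<xi> \<bullet> L (x - y) = (\<Sum>l\<in>UNIV. \<xi>$l * (F l x \<bullet> (x - y)))"
      by (simp add: inner_vec_def[of \<xi>] L_def)
    then have "scalarization F \<xi> x \<bullet> (y - x) = - (\<xi> \<bullet> L (x - y))"
      by (simp add: inner_scalarization_swap)
    then show "scalarization F \<xi> x \<bullet> (y - x) \<ge> 0"
      using \<xi>[of "L (x - y)"] \<open>y \<in> K\<close> by (auto simp: B_def)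
  qed
  with \<open>\<xi> \<in> weight_simplex\<close> show thesis by (rule that)
qed

lemma closed_Sol_w:
  assumes "closed K" "\<And>l. continuous_on K (F l)"
  shows "closed (Sol_w F K)"
proof -
  have "Sol_w F K = K \<inter> (\<Inter>y\<in>K. \<Union>l. {x \<in> K. F l x \<bullet> (x - y) \<le> 0})"
    by (auto simp: Sol_w_def not_less)
  also have "closed \<dots>"
    using assms
    by (intro closed_Int closed_INT closed_UN ballI continuous_on_closed_Collect_le continuous_intros) auto
  finally show ?thesis .
qed

section \<open>Bounded components\<close>

lemma connected_subset_clopen:
  assumes "connected Z" "Z \<subseteq> S" "open W" "closed V" "V = S \<inter> W" "Z \<inter> V \<noteq> {}"
  shows "Z \<subseteq> V"
proof -
  have "Z \<inter> V = Z \<inter> W" using assms(2,5) by auto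
  then have "openin (top_of_set Z) (Z \<inter> V)" using assms(3) by auto
  moreover have "closedin (top_of_set Z) (Z \<inter> V)" using assms(4) by (rule closedin_closed_Int)
  ultimately have "Z \<inter> V = {} \<or> Z \<inter> V = Z"
    using assms(1) unfolding connected_clopen by blast
  with assms(6) show ?thesis by blast
qed

lemma connected_component_set_subset_eq:
  assumes "connected_component_set S x \<subseteq> T" "T \<subseteq> S"
  shows "connected_component_set T x = connected_component_set S x"
proof
  show "connected_component_set T x \<subseteq> connected_component_set S x"
    using assms(2) by (rule connected_component_mono)
  show "connected_component_set S x \<subseteq> connected_component_set T x"
  proof (cases "x \<in> S")
    case True
    then show ?thesis
      using assms(1) by (intro connected_component_maximal) auto
  qed (metis connected_component_eq_empty empty_subsetI)
qed

text \<open>Components and quasi-components of a compact Hausdorff space coincide.\<close>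
lemma compact_component_separated:
  fixes X :: "'a::euclidean_space set"
  assumes "compact X" "x \<in> X" "compact L" "L \<subseteq> X" "L \<inter> connected_component_set X x = {}"
  obtains A where "closed A" "openin (top_of_set X) A" "connected_component_set X x \<subseteq> A" "A \<inter> L = {}"
proof -
  let ?T = "top_of_set X"
  define C where "C = connected_component_set X x"
  have "C \<in> connected_components_of ?T"
    unfolding connected_components_of_def C_def using assms(2)
    by (auto simp: connected_component_of_set connected_component_of_def connectedin_subtopology
        connected_component_def intro!: image_eqI[where x=x])
  moreover have "compact_space ?T" "Hausdorff_space ?T"
    using assms(1) by (simp_all add: compact_space_subtopology compactin_euclidean_iff Hausdorff_space_subtopology)
  ultimately have "C \<in> quasi_components_of ?T"
    using quasi_eq_connected_components_of by blast
  moreover have "compactin ?T L"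
    using assms(3,4) by (simp add: compactin_subtopology compactin_euclidean_iff)
  ultimately have "separated_between ?T C L"
    using separated_between_quasi_component_compact assms(5) by (auto simp: C_def disjnt_def)
  then obtain A B where AB: "openin ?T A" "openin ?T B" "A \<union> B = X" "disjnt A B" "C \<subseteq> A" "L \<subseteq> B"
    unfolding separated_between_def by auto
  have "A = X - B"
    using AB(3,4) by (auto simp: disjnt_def)
  then have "closedin ?T A"
    using AB(2) by auto
  then have "closed A"
    using assms(1) by (simp add: closedin_closed_trans compact_imp_closed)
  with AB show thesis
    using that[of A] by (auto simp: C_def disjnt_def)
qed

lemma bounded_component_clopen_nbhd:
  fixes S :: "'a::euclidean_space set"
  assumes "closed S" "x \<in> S" "bounded (connected_component_set S x)"
    and "p \<in> S" "p \<notin> connected_component_set S x"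
  obtains V W where "open W" "V = S \<inter> W" "closed V" "bounded V"
    "connected_component_set S x \<subseteq> V" "p \<notin> V"
proof -
  define C where "C = connected_component_set S x"
  have "bounded (insert p C)"
    using assms(3) by (simp add: C_def)
  then obtain \<rho> where \<rho>: "insert p C \<subseteq> ball 0 \<rho>"
    using bounded_subset_ballD by blast
  define X where "X = S \<inter> cball 0 \<rho>"
  have "compact X"
    unfolding X_def using assms(1) by (simp add: closed_Int_compact)
  have "C \<subseteq> X"
    using \<rho> unfolding X_def C_def by (auto simp: connected_component_subset)
  have "x \<in> X"
    using \<open>C \<subseteq> X\<close> assms(2) by (auto simp: C_def)
  have "connected_component_set X x = C"
    using connected_component_set_subset_eq[OF \<open>C \<subseteq> X\<close>[unfolded C_def]] by (simp add: X_def C_def)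
  define L where "L = insert p (X \<inter> sphere 0 \<rho>)"
  txt \<open>The sphere is put into L so that the clopen piece of X found below avoids the boundary of
    the ball, which makes it relatively open in S as well.\<close>
  have "compact L"
    unfolding L_def X_def using assms(1) by (intro compact_insert compact_Int_closed closed_Int_compact) auto
  moreover have "L \<subseteq> X"
    using \<rho> assms(4) by (auto simp: L_def X_def)
  moreover have "L \<inter> connected_component_set X x = {}"
    unfolding \<open>connected_component_set X x = C\<close> using \<rho> assms(5) by (auto simp: L_def C_def)
  ultimately obtain A where A: "closed A" "openin (top_of_set X) A" "C \<subseteq> A" "A \<inter> L = {}"
    using compact_component_separated[OF \<open>compact X\<close> \<open>x \<in> X\<close>] \<open>connected_component_set X x = C\<close>
    by metis
  obtain W where W: "open W" "A = X \<inter> W"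
    using A(2) by (auto simp: openin_open)
  have "A \<inter> sphere 0 \<rho> = {}"
    using A(4) W by (auto simp: L_def)
  then have "A = S \<inter> (W \<inter> ball 0 \<rho>)"
    using W unfolding X_def by (auto simp: dist_norm)
  moreover have "p \<notin> A" "bounded A"
    using A(4) W(2) \<open>compact X\<close> compact_imp_bounded bounded_subset by (auto simp: L_def)
  ultimately show ?thesis
    using A(1,3) W(1) unfolding C_def by (intro that[of "W \<inter> ball 0 \<rho>" A]) auto
qed

section \<open>Weights whose solutions meet a clopen set\<close>

definition weights_meeting :: "('m::finite \<Rightarrow> 'a \<Rightarrow> 'a::real_inner) \<Rightarrow> 'a set \<Rightarrow> 'a set \<Rightarrow> (real^'m) set" where
  "weights_meeting F K V = {\<xi>\<in>weight_simplex. vi_solutions (scalarization F \<xi>) K \<inter> V \<noteq> {}}"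

lemma closed_weights_meeting:
  fixes F :: "'m::finite \<Rightarrow> 'a::real_inner \<Rightarrow> 'a"
  assumes cont: "\<And>l. continuous_on K (F l)" and "compact V" "V \<subseteq> K"
  shows "closed (weights_meeting F K V)"
proof -
  define h where "h y q = scalarization F (fst q) (snd q) \<bullet> (y - snd q)" for y and q :: "(real^'m) \<times> 'a"
  have "continuous_on (weight_simplex \<times> V) (\<lambda>q. F l (snd q))" for l
    by (rule continuous_on_compose2[OF cont continuous_on_snd]) (use \<open>V \<subseteq> K\<close> in auto)
  then have h: "continuous_on (weight_simplex \<times> V) (h y)" for y
    unfolding h_def inner_scalarization by (intro continuous_intros)
  have "compact (weight_simplex \<times> V)"
    using compact_weight_simplex \<open>compact V\<close> by (rule compact_Times)
  then have "closed {q \<in> weight_simplex \<times> V. 0 \<le> h y q}" for y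
    by (rule continuous_on_closed_Collect_le[where f="\<lambda>_. 0", OF continuous_on_const h compact_imp_closed])
  define \<Gamma> where "\<Gamma> = (weight_simplex \<times> V) \<inter> (\<Inter>y\<in>K. {q \<in> weight_simplex \<times> V. 0 \<le> h y q})"
  have "compact \<Gamma>"
    unfolding \<Gamma>_def using \<open>compact (weight_simplex \<times> V)\<close> \<open>closed {q \<in> _. 0 \<le> h _ q}\<close>
    by (intro compact_Int_closed closed_INT) auto
  then have "compact (fst ` \<Gamma>)"
    by (intro compact_continuous_image continuous_on_fst continuous_on_id)
  moreover have "weights_meeting F K V = fst ` \<Gamma>"
  proof (intro equalityI subsetI)
    fix \<xi> assume "\<xi> \<in> weights_meeting F K V"
    then obtain z where "\<xi> \<in> weight_simplex" "z \<in> vi_solutions (scalarization F \<xi>) K" "z \<in> V"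
      by (auto simp: weights_meeting_def)
    then show "\<xi> \<in> fst ` \<Gamma>"
      by (intro image_eqI[of _ _ "(\<xi>, z)"]) (auto simp: \<Gamma>_def h_def vi_solutions_def)
  next
    fix \<xi> assume "\<xi> \<in> fst ` \<Gamma>"
    then show "\<xi> \<in> weights_meeting F K V"
      using \<open>V \<subseteq> K\<close> by (force simp: weights_meeting_def \<Gamma>_def h_def vi_solutions_def)
  qed
  ultimately show ?thesis
    by (simp add: compact_imp_closed)
qed

lemma scalarized_solutions_subset_clopen:
  assumes "convex K" "\<And>l. continuous_on K (F l)" "vvi_monotone F K"
    and "open W" "closed V" "V = Sol_w F K \<inter> W" "\<xi> \<in> weights_meeting F K V"
  shows "vi_solutions (scalarization F \<xi>) K \<subseteq> V"
proof (rule connected_subset_clopen[OF _ _ assms(4-6)])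
  have "\<xi> \<in> weight_simplex"
    using assms(7) by (simp add: weights_meeting_def)
  then show "connected (vi_solutions (scalarization F \<xi>) K)"
    using assms(1-3) by (intro convex_connected convex_vi_solutions continuous_on_scalarization
        monotone_op_on_scalarization weight_simplex_nonneg)
  show "vi_solutions (scalarization F \<xi>) K \<subseteq> Sol_w F K"
    using \<open>\<xi> \<in> weight_simplex\<close> by (rule vi_solutions_scalarization_subset_Sol_w)
  show "vi_solutions (scalarization F \<xi>) K \<inter> V \<noteq> {}"
    using assms(7) by (simp add: weights_meeting_def)
qed

lemma weights_meeting_nonempty:
  assumes "convex K" "x \<in> Sol_w F K" "x \<in> V"
  shows "weights_meeting F K V \<noteq> {}"
proof -
  obtain \<xi> where "\<xi> \<in> weight_simplex" "x \<in> vi_solutions (scalarization F \<xi>) K"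
    using Sol_w_imp_scalarized_solution[OF assms(1,2)] .
  with assms(3) show ?thesis
    by (auto simp: weights_meeting_def)
qed

lemma weights_meeting_ne_weight_simplex:
  assumes "convex K" "\<And>l. continuous_on K (F l)" "vvi_monotone F K"
    and "open W" "closed V" "V = Sol_w F K \<inter> W" "p \<in> Sol_w F K" "p \<notin> V"
  shows "weights_meeting F K V \<noteq> weight_simplex"
proof
  assume all: "weights_meeting F K V = weight_simplex"
  obtain \<xi> where "\<xi> \<in> weight_simplex" "p \<in> vi_solutions (scalarization F \<xi>) K"
    using Sol_w_imp_scalarized_solution[OF assms(1,7)] .
  then show False
    using scalarized_solutions_subset_clopen[OF assms(1-6), of \<xi>] all assms(8) by blast
qed

lemma scalarization_near:
  assumes "finite P" "\<epsilon> > 0"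
  obtains d where "d > 0"
    "\<And>\<xi>'. dist \<xi>' \<xi> < d \<Longrightarrow> \<forall>p\<in>P. norm (scalarization F \<xi>' p - scalarization F \<xi> p) < \<epsilon>"
proof -
  have "((\<lambda>\<xi>'. scalarization F \<xi>' p) \<longlongrightarrow> scalarization F \<xi> p) (at \<xi>)" for p
    unfolding scalarization_def by (intro tendsto_intros)
  then have "\<forall>\<^sub>F \<xi>' in at \<xi>. dist (scalarization F \<xi>' p) (scalarization F \<xi> p) < \<epsilon>" for p
    using assms(2) by (rule tendstoD)
  then have "\<forall>\<^sub>F \<xi>' in at \<xi>. \<forall>p\<in>P. norm (scalarization F \<xi>' p - scalarization F \<xi> p) < \<epsilon>"
    using assms(1) by (simp add: dist_norm eventually_ball_finite)
  then obtain d where "d > 0"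
    and near: "\<And>\<xi>'. \<xi>' \<noteq> \<xi> \<Longrightarrow> dist \<xi>' \<xi> < d \<Longrightarrow> \<forall>p\<in>P. norm (scalarization F \<xi>' p - scalarization F \<xi> p) < \<epsilon>"
    by (auto simp: eventually_at)
  show thesis
  proof (rule that[OF \<open>d > 0\<close>])
    fix \<xi>' assume "dist \<xi>' \<xi> < d"
    then show "\<forall>p\<in>P. norm (scalarization F \<xi>' p - scalarization F \<xi> p) < \<epsilon>"
      using near assms(2) by (cases "\<xi>' = \<xi>") auto
  qed
qed

lemma openin_weights_meeting:
  assumes K: "closed K" "convex K" and cont: "\<And>l. continuous_on K (F l)" and mono: "vvi_monotone F K"
    and V: "open W" "closed V" "bounded V" "V = Sol_w F K \<inter> W"
  shows "openin (top_of_set weight_simplex) (weights_meeting F K V)"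
  unfolding openin_euclidean_subtopology_iff
proof (intro conjI ballI)
  show "weights_meeting F K V \<subseteq> weight_simplex"
    by (auto simp: weights_meeting_def)
  fix \<xi> assume "\<xi> \<in> weights_meeting F K V"
  define G where "G = scalarization F \<xi>"
  have "vi_solutions G K \<subseteq> V"
    using scalarized_solutions_subset_clopen[OF K(2) cont mono V(1,2,4) \<open>\<xi> \<in> _\<close>] by (simp add: G_def)
  obtain x0 where "x0 \<in> vi_solutions G K"
    using \<open>\<xi> \<in> weights_meeting F K V\<close> by (auto simp: G_def weights_meeting_def)
  obtain \<rho> where "V \<subseteq> ball 0 \<rho>"
    using bounded_subset_ballD[OF V(3)] by blast
  define U where "U = W \<inter> ball 0 \<rho>"
  have "open U" "bounded U" "vi_solutions G K \<subseteq> U"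
    using V(1,4) \<open>vi_solutions G K \<subseteq> V\<close> \<open>V \<subseteq> ball 0 \<rho>\<close> by (auto simp: U_def)
  then obtain P \<epsilon> where "finite P" "P \<subseteq> K" "\<epsilon> > 0" and stable:
    "\<And>G'. continuous_on K G' \<Longrightarrow> monotone_op_on K G' \<Longrightarrow> (\<And>p. p \<in> P \<Longrightarrow> norm (G' p - G p) < \<epsilon>)
       \<Longrightarrow> vi_solutions G' K \<inter> U \<noteq> {}"
    by (rule vi_solutions_stable[OF K continuous_on_scalarization[where F=F and \<xi>=\<xi>, OF cont, folded G_def]
        \<open>x0 \<in> vi_solutions G K\<close>]) blast
  obtain d where "d > 0"
    and near: "\<And>\<xi>'. dist \<xi>' \<xi> < d \<Longrightarrow> \<forall>p\<in>P. norm (scalarization F \<xi>' p - G p) < \<epsilon>"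
    unfolding G_def by (rule scalarization_near[OF \<open>finite P\<close> \<open>\<epsilon> > 0\<close>]) blast
  show "\<exists>e>0. \<forall>\<xi>'\<in>weight_simplex. dist \<xi>' \<xi> < e \<longrightarrow> \<xi>' \<in> weights_meeting F K V"
  proof (intro exI[of _ d] conjI ballI impI \<open>d > 0\<close>)
    fix \<xi>' assume "\<xi>' \<in> weight_simplex" "dist \<xi>' \<xi> < d"
    then obtain z where "z \<in> vi_solutions (scalarization F \<xi>') K" "z \<in> U"
      using stable[OF continuous_on_scalarization[where F=F, OF cont]
          monotone_op_on_scalarization[OF mono weight_simplex_nonneg]] near by blast
    moreover have "z \<in> Sol_w F K"
      using vi_solutions_scalarization_subset_Sol_w[OF \<open>\<xi>' \<in> weight_simplex\<close>] \<open>z \<in> vi_solutions _ K\<close> by blast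
    ultimately show "\<xi>' \<in> weights_meeting F K V"
      using \<open>\<xi>' \<in> weight_simplex\<close> V(4) by (auto simp: U_def weights_meeting_def)
  qed
qed

theorem theorem2:
  fixes F :: "'m::finite \<Rightarrow> real^'n \<Rightarrow> real^'n" and K :: "(real^'n) set"
  assumes "K \<noteq> {}" and "closed K" and "convex K"
    and "\<And>l. continuous_on K (F l)"
    and "vvi_monotone F K"
    and "\<not> connected (Sol_w F K)"
  shows "\<forall>x\<in>Sol_w F K. \<not> bounded (connected_component_set (Sol_w F K) x)"
proof (intro ballI notI)
  fix x assume x: "x \<in> Sol_w F K" and bdd: "bounded (connected_component_set (Sol_w F K) x)"
  from assms(6) have "connected_component_set (Sol_w F K) x \<noteq> Sol_w F K"
    by (metis connected_connected_component)
  then obtain p where p: "p \<in> Sol_w F K" "p \<notin> connected_component_set (Sol_w F K) x"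
    using connected_component_subset by blast
  obtain V W where V: "open W" "V = Sol_w F K \<inter> W" "closed V" "bounded V"
    "connected_component_set (Sol_w F K) x \<subseteq> V" "p \<notin> V"
    by (rule bounded_component_clopen_nbhd[OF closed_Sol_w[OF assms(2,4)] x bdd p])
  have "compact V" "V \<subseteq> K"
    using V(2-4) by (auto simp: compact_eq_bounded_closed Sol_w_def)
  have "x \<in> V"
    using V(5) x connected_component_refl_eq by blast
  have "openin (top_of_set weight_simplex) (weights_meeting F K V)"
    using openin_weights_meeting[OF assms(2-5) V(1,3,4,2)] .
  moreover have "closedin (top_of_set weight_simplex) (weights_meeting F K V)"
    using closed_weights_meeting[OF assms(4) \<open>compact V\<close> \<open>V \<subseteq> K\<close>]
    by (rule closed_subset[rotated]) (auto simp: weights_meeting_def)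
  ultimately have "weights_meeting F K V = {} \<or> weights_meeting F K V = weight_simplex"
    using connected_clopen[THEN iffD1, OF convex_connected[OF convex_weight_simplex]] by blast
  then show False
    using weights_meeting_nonempty[OF assms(3) x \<open>x \<in> V\<close>]
      weights_meeting_ne_weight_simplex[OF assms(3-5) V(1,3,2) p(1) V(6)] by blast
qed

end
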